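(* Let $A$ be a finite nonempty set of positive real numbers, let $P=A\times A\subset\mathbb{R}^2$, and let $m<m'$ be two consecutive elements of the ratio set $A/A=\{b/a: a,b\in A\}$ (i.e. no element of $A/A$ lies strictly between them). Let $n=|\{(x,y)\in P: y/x=m\}|$ and $n'=|\{(x,y)\in P: y/x=m'\}|$. Then the open interval $(m,m')$ contains at least $n+n'-1$ distinct elements of $\frac{A+A}{A+A}$.
   Context: $\frac{A+A}{A+A}:=\left\{\frac{a+b}{c+d}: a,b,c,d\in A\right\}$. *)

theory Defs
  imports Main Complex_Main
begin

definition ratio_set :: "real set \<Rightarrow> real set" where
  "ratio_set A = {b / a | a b. a \<in> A \<and> b \<in> A}"

definition sum_quotient_set :: "real set \<Rightarrow> real set" where
  "sum_quotient_set A = {(a + b) / (c + d) | a b c d. a \<in> A \<and> b \<in> A \<and> c \<in> A \<and> d \<in> A}"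

end

theory Submission
  imports Defs
begin

text \<open>For \<open>x \<in> X = {x \<in> A. m x \<in> A}\<close> and \<open>y \<in> Y = {y \<in> A. m' y \<in> A}\<close> the weighted mean
  \<open>(m x + m' y) / (x + y)\<close> is the quotient \<open>(mx + m'y) / (x + y)\<close> of two sums of elements of \<open>A\<close>,
  and it lies strictly between \<open>m\<close> and \<open>m'\<close>. It is a strictly increasing function of \<open>y / x\<close>.
  With \<open>x\<^sub>0 = min X\<close> and \<open>y\<^sub>0 = min Y\<close>, the values at \<open>(x, y\<^sub>0)\<close> for \<open>x \<in> X\<close> are pairwise distinct
  and at most the value at \<open>(x\<^sub>0, y\<^sub>0)\<close>, while those at \<open>(x\<^sub>0, y)\<close> for \<open>y \<in> Y\<close> are pairwise distinct
  and at least it; so at least \<open>|X| + |Y| - 1\<close> distinct values occur, and \<open>|X|, |Y|\<close> are the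
  numbers of points of \<open>A \<times> A\<close> on the lines of slope \<open>m\<close> and \<open>m'\<close>.\<close>

definition weighted_mean :: "real \<Rightarrow> real \<Rightarrow> real \<Rightarrow> real \<Rightarrow> real" where
  "weighted_mean m m' x y = (m * x + m' * y) / (x + y)"

lemma weighted_mean_le_iff:
  fixes m m' x y x' y' :: real
  assumes "0 < x" "0 < y" "0 < x'" "0 < y'" "m < m'"
  shows "weighted_mean m m' x y \<le> weighted_mean m m' x' y' \<longleftrightarrow> y * x' \<le> y' * x"
proof -
  have "weighted_mean m m' x y \<le> weighted_mean m m' x' y'
          \<longleftrightarrow> (m * x + m' * y) * (x' + y') \<le> (m * x' + m' * y') * (x + y)"
    using assms by (simp add: weighted_mean_def field_simps)
  also have "\<dots> \<longleftrightarrow> (m' - m) * (y * x') \<le> (m' - m) * (y' * x)"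
    by (simp add: algebra_simps)
  also have "\<dots> \<longleftrightarrow> y * x' \<le> y' * x"
    using assms by simp
  finally show ?thesis .
qed

lemma weighted_mean_eq_iff:
  fixes m m' x y x' y' :: real
  assumes "0 < x" "0 < y" "0 < x'" "0 < y'" "m < m'"
  shows "weighted_mean m m' x y = weighted_mean m m' x' y' \<longleftrightarrow> y * x' = y' * x"
  using weighted_mean_le_iff[OF assms] weighted_mean_le_iff[OF assms(3,4,1,2,5)] by argo

lemma weighted_mean_strictly_between:
  fixes m m' x y :: real
  assumes "0 < x" "0 < y" "m < m'"
  shows "weighted_mean m m' x y \<in> {m<..<m'}"
proof -
  have "m * (x + y) < m * x + m' * y" "m * x + m' * y < m' * (x + y)"
    using assms by (simp_all add: algebra_simps)
  then show ?thesis
    using assms by (simp add: weighted_mean_def field_simps)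
qed

lemma card_union_ge_if_card_inter_le_one:
  assumes "finite S" "finite T" "card (S \<inter> T) \<le> 1"
  shows "card S + card T \<le> card (S \<union> T) + 1"
  using card_Un_Int[OF assms(1,2)] assms(3) by linarith

lemma card_weighted_means_ge:
  fixes X Y :: "real set" and m m' :: real
  assumes "finite X" "finite Y" "X \<noteq> {}" "Y \<noteq> {}"
    and "\<forall>x\<in>X. 0 < x" "\<forall>y\<in>Y. 0 < y" "m < m'"
  shows "card X + card Y \<le> card ((\<lambda>(x, y). weighted_mean m m' x y) ` (X \<times> Y)) + 1"
proof -
  let ?w = "weighted_mean m m'"
  define x0 where "x0 = Min X"
  define y0 where "y0 = Min Y"
  have x0: "x0 \<in> X" "\<And>x. x \<in> X \<Longrightarrow> x0 \<le> x"
    using assms(1,3) by (simp_all add: x0_def)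
  have y0: "y0 \<in> Y" "\<And>y. y \<in> Y \<Longrightarrow> y0 \<le> y"
    using assms(2,4) by (simp_all add: y0_def)
  define T1 where "T1 = (\<lambda>x. ?w x y0) ` X"
  define T2 where "T2 = (\<lambda>y. ?w x0 y) ` Y"
  have "inj_on (\<lambda>x. ?w x y0) X"
    using assms(5-7) y0(1) by (auto intro!: inj_onI simp: weighted_mean_eq_iff)
  then have card_T1: "card T1 = card X"
    by (simp add: T1_def card_image)
  have "inj_on (\<lambda>y. ?w x0 y) Y"
    using assms(5-7) x0(1) by (auto intro!: inj_onI simp: weighted_mean_eq_iff)
  then have card_T2: "card T2 = card Y"
    by (simp add: T2_def card_image)
  have T1_below: "t \<le> ?w x0 y0" if "t \<in> T1" for t
  proof -
    obtain x where "x \<in> X" "t = ?w x y0" using \<open>t \<in> T1\<close> by (auto simp: T1_def)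
    then show ?thesis
      using assms(5-7) x0 y0(1) by (simp add: weighted_mean_le_iff mult_left_mono)
  qed
  have T2_above: "?w x0 y0 \<le> t" if "t \<in> T2" for t
  proof -
    obtain y where "y \<in> Y" "t = ?w x0 y" using \<open>t \<in> T2\<close> by (auto simp: T2_def)
    then show ?thesis
      using assms(5-7) x0(1) y0 by (simp add: weighted_mean_le_iff mult_right_mono)
  qed
  have "T1 \<inter> T2 \<subseteq> {?w x0 y0}"
    using T1_below T2_above by fastforce
  then have "card (T1 \<inter> T2) \<le> 1"
    using card_mono[of "{?w x0 y0}"] by simp
  then have "card X + card Y \<le> card (T1 \<union> T2) + 1"
    using card_union_ge_if_card_inter_le_one[of T1 T2] assms(1,2) card_T1 card_T2
    by (simp add: T1_def T2_def)
  also have "card (T1 \<union> T2) \<le> card ((\<lambda>(x, y). ?w x y) ` (X \<times> Y))"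
    using assms(1,2) x0(1) y0(1) by (intro card_mono) (auto simp: T1_def T2_def)
  finally show ?thesis by simp
qed

lemma card_pairs_with_ratio:
  fixes A :: "real set" and r :: real
  assumes "\<forall>a\<in>A. 0 < a"
  shows "card {(x, y) \<in> A \<times> A. y / x = r} = card {x \<in> A. r * x \<in> A}"
proof -
  have "{(x, y) \<in> A \<times> A. y / x = r} = (\<lambda>x. (x, r * x)) ` {x \<in> A. r * x \<in> A}"
    using assms by (force simp: field_simps)
  then show ?thesis
    by (simp add: card_image inj_on_def)
qed

lemma ratio_set_witness:
  assumes "\<forall>a\<in>A. 0 < a" "r \<in> ratio_set A"
  shows "{x \<in> A. r * x \<in> A} \<noteq> {}"
  using assms by (force simp: ratio_set_def)

lemma weighted_mean_mem_sum_quotient_set: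
  assumes "x \<in> A" "y \<in> A" "m * x \<in> A" "m' * y \<in> A"
  shows "weighted_mean m m' x y \<in> sum_quotient_set A"
  using assms unfolding weighted_mean_def sum_quotient_set_def by blast

lemma finite_sum_quotient_set:
  assumes "finite A"
  shows "finite (sum_quotient_set A)"
proof -
  have "sum_quotient_set A = (\<lambda>(a, b, c, d). (a + b) / (c + d)) ` (A \<times> A \<times> A \<times> A)"
    unfolding sum_quotient_set_def by force
  then show ?thesis
    using assms by simp
qed

theorem mainTheorem2:
  fixes A :: "real set" and m m' :: real
  assumes "finite A" and "A \<noteq> {}" and "\<forall>a\<in>A. a > 0"
    and "m \<in> ratio_set A" and "m' \<in> ratio_set A" and "m < m'"
    and "\<forall>r\<in>ratio_set A. \<not> (m < r \<and> r < m')"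
  shows "card (sum_quotient_set A \<inter> {m<..<m'}) + 1 \<ge>
           card {(x, y) \<in> A \<times> A. y / x = m} + card {(x, y) \<in> A \<times> A. y / x = m'}"
proof -
  define X where "X = {x \<in> A. m * x \<in> A}"
  define Y where "Y = {y \<in> A. m' * y \<in> A}"
  have pos: "\<forall>x\<in>X. 0 < x" "\<forall>y\<in>Y. 0 < y"
    using assms(3) by (auto simp: X_def Y_def)
  have "(\<lambda>(x, y). weighted_mean m m' x y) ` (X \<times> Y) \<subseteq> sum_quotient_set A \<inter> {m<..<m'}"
    using pos assms(6) weighted_mean_strictly_between[of _ _ m m']
    by (auto simp: X_def Y_def weighted_mean_mem_sum_quotient_set)
  then have "card ((\<lambda>(x, y). weighted_mean m m' x y) ` (X \<times> Y))
               \<le> card (sum_quotient_set A \<inter> {m<..<m'})"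
    using assms(1) by (intro card_mono) (simp_all add: finite_sum_quotient_set)
  moreover have "card X + card Y \<le> card ((\<lambda>(x, y). weighted_mean m m' x y) ` (X \<times> Y)) + 1"
    using assms(1,6) pos ratio_set_witness[OF assms(3,4)] ratio_set_witness[OF assms(3,5)]
    by (intro card_weighted_means_ge) (simp_all add: X_def Y_def)
  ultimately show ?thesis
    using card_pairs_with_ratio[OF assms(3)] by (simp add: X_def Y_def)
qed

end
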